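(* Under the fixed admissible embedding $K\hookrightarrow M_2(\mathbb{Q})$, let $h_0$ be the point of the upper half plane fixed by $K^\times$ and write the image of $\varpi_c=\frac{cD+c\sqrt{D}}{2}$ as $\begin{pmatrix} x & y\\ z & w\end{pmatrix}$. Then $K=\mathbb{Q}+\mathbb{Q}h_0$ and $\mathcal{O}_c=\mathbb{Z}+\mathbb{Z}\, y h_0^{-1}$.
   Context: $K$ is an imaginary quadratic field of discriminant $D$, $c$ is a positive integer coprime to $N=N_0N_1^2$, and $\mathcal{O}_c=\mathbb{Z}+c\mathcal{O}_K=\mathbb{Z}+\mathbb{Z}\varpi_c$ with $\varpi_c=\frac{cD+c\sqrt{D}}{2}$. The embedding $K\hookrightarrow M_2(\mathbb{Q})$ is admissible, i.e. $K\cap M_2(\mathbb{Z})=K\cap R_0(N_0)=\mathcal{O}_c$, where $R_0(N_0)$ is the set of integer matrices that are upper triangular mod $N_0$. The entry $z$ is nonzero since $K$ is a field. *)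

theory Defs
  imports "HOL-Analysis.Analysis" "HOL-Computational_Algebra.Squarefree"
begin

definition imag_quad_disc :: "int \<Rightarrow> bool" where
  "imag_quad_disc D \<longleftrightarrow> D < 0 \<and>
     ((D mod 4 = 1 \<and> squarefree D) \<or>
      (D mod 4 = 0 \<and> squarefree (D div 4) \<and> (D div 4) mod 4 \<in> {2, 3}))"

definition sqrtD :: "int \<Rightarrow> complex" where
  "sqrtD D = \<i> * complex_of_real (sqrt (real_of_int (- D)))"

definition Kfield :: "int \<Rightarrow> complex set" where
  "Kfield D = {of_rat a + of_rat b * sqrtD D | a b. True}"

definition varpi :: "int \<Rightarrow> int \<Rightarrow> complex" where
  "varpi D c = (of_int (c * D) + of_int c * sqrtD D) / 2"

definition order_c :: "int \<Rightarrow> int \<Rightarrow> complex set" where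
  "order_c D c = {of_int m + of_int n * varpi D c | m n. True}"

definition int_mat :: "rat^2^2 \<Rightarrow> bool" where
  "int_mat A \<longleftrightarrow> (\<forall>i j. A $ i $ j \<in> \<int>)"

definition R0 :: "int \<Rightarrow> (rat^2^2) set" where
  "R0 N0 = {A. int_mat A \<and> (\<exists>k::int. A $ 2 $ 1 = of_int (N0 * k))}"

definition alg_embedding :: "int \<Rightarrow> (complex \<Rightarrow> rat^2^2) \<Rightarrow> bool" where
  "alg_embedding D \<iota> \<longleftrightarrow>
     \<iota> 1 = mat 1 \<and>
     (\<forall>a\<in>Kfield D. \<forall>b\<in>Kfield D. \<iota> (a + b) = \<iota> a + \<iota> b \<and> \<iota> (a * b) = \<iota> a ** \<iota> b) \<and>
     inj_on \<iota> (Kfield D)"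

definition admissible :: "int \<Rightarrow> int \<Rightarrow> int \<Rightarrow> (complex \<Rightarrow> rat^2^2) \<Rightarrow> bool" where
  "admissible D c N0 \<iota> \<longleftrightarrow>
     {a \<in> Kfield D. int_mat (\<iota> a)} = order_c D c \<and>
     {a \<in> Kfield D. \<iota> a \<in> R0 N0} = order_c D c"

definition moebius :: "rat^2^2 \<Rightarrow> complex \<Rightarrow> complex" where
  "moebius A h = (of_rat (A$1$1) * h + of_rat (A$1$2)) / (of_rat (A$2$1) * h + of_rat (A$2$2))"

end

theory Submission
  imports Defs
begin

text \<open>
  Let w = sqrt D and M = [[a, b], [e, f]] be the image of w. From M^2 = D with D < 0 one
  gets f = -a and be = D - a^2 \<noteq> 0. The fixed point equation of the Moebius map of M is then
  the quadratic e h0^2 - 2a h0 - b = 0, whose discriminant gives (e h0 - a)^2 = a^2 + be = w^2,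
  so e h0 = a + s w with s = 1 or s = -1, and K = Q + Q h0. The same equation gives
  b/h0 = s w - a. Since 2 \<iota>(\<varpi>) = cD + cM, the entry y of \<iota>(\<varpi>) is cb/2, so
  y/h0 = c(s w - a)/2, which differs from s \<varpi> by an integer: the upper left entry (cD + ca)/2
  of \<iota>(\<varpi>) is integral because \<varpi> lies in O_c and the embedding is admissible.
\<close>

lemma rat_span_eq_affine:
  fixes w h :: "'a::field_char_0"
  assumes h: "h = of_rat a + of_rat b * w" and "b \<noteq> 0"
  shows "{of_rat p + of_rat q * w | p q. True} = {of_rat p + of_rat q * h | p q. True}"
proof (intro equalityI subsetI)
  fix x assume "x \<in> {of_rat p + of_rat q * w | p q. True}"
  then obtain p q where x: "x = of_rat p + of_rat q * w" by blast
  have "x = of_rat (p - q * a / b) + of_rat (q / b) * h"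
    unfolding x h using \<open>b \<noteq> 0\<close> by (simp add: of_rat_diff of_rat_mult of_rat_divide field_simps)
  then show "x \<in> {of_rat p + of_rat q * h | p q. True}" by blast
next
  fix x assume "x \<in> {of_rat p + of_rat q * h | p q. True}"
  then obtain p q where x: "x = of_rat p + of_rat q * h" by blast
  have "x = of_rat (p + q * a) + of_rat (q * b) * w"
    unfolding x h by (simp add: of_rat_add of_rat_mult algebra_simps)
  then show "x \<in> {of_rat p + of_rat q * w | p q. True}" by blast
qed

lemma int_span_eq_affine:
  fixes w z :: "'a::comm_ring_1" and s k :: int
  assumes z: "z = of_int s * w + of_int k" and "s \<in> {1, -1}"
  shows "{of_int m + of_int n * w | m n. True} = {of_int m + of_int n * z | m n. True}"
proof (intro equalityI subsetI)
  have ss: "of_int s * of_int s = (1 :: 'a)"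
    using \<open>s \<in> {1, -1}\<close> by auto
  fix x assume "x \<in> {of_int m + of_int n * w | m n. True}"
  then obtain m n where x: "x = of_int m + of_int n * w" by blast
  have "x = of_int (m - n * s * k) + of_int (n * s) * z"
    unfolding x z by (simp add: algebra_simps ss)
  then show "x \<in> {of_int m + of_int n * z | m n. True}" by blast
next
  fix x assume "x \<in> {of_int m + of_int n * z | m n. True}"
  then obtain m n where x: "x = of_int m + of_int n * z" by blast
  have "x = of_int (m + n * k) + of_int (n * s) * w"
    unfolding x z by (simp add: algebra_simps)
  then show "x \<in> {of_int m + of_int n * w | m n. True}" by blast
qed

lemma mat2_square_eq_neg_scalar:
  fixes M :: "'a::linordered_idom^2^2"
  assumes "M ** M = mat d" and "d < 0"
  shows "M$2$2 = - M$1$1" and "M$1$2 * M$2$1 = d - (M$1$1)\<^sup>2"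
proof -
  obtain a b e f where abef: "a = M$1$1" "b = M$1$2" "e = M$2$1" "f = M$2$2" by blast
  have eqs: "a * a + b * e = d" "b * (a + f) = 0" "e * (a + f) = 0"
    using assms(1) unfolding vec_eq_iff
    by (auto simp: matrix_matrix_mult_def mat_def sum_2 forall_2 abef algebra_simps)
  have "a + f = 0"
  proof (rule ccontr)
    assume "a + f \<noteq> 0"
    then have "b = 0" using eqs(2) by simp
    then have "a * a = d" using eqs(1) by simp
    then show False using \<open>d < 0\<close> by (metis not_square_less_zero)
  qed
  then show "M$2$2 = - M$1$1" using abef by (simp add: add_eq_0_iff)
  show "M$1$2 * M$2$1 = d - (M$1$1)\<^sup>2"
    using eqs(1) abef by (simp add: power2_eq_square algebra_simps)
qed

text \<open>
  The denominator cannot vanish: otherwise the quotient is 0 by convention, contradicting h \<noteq> 0.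
\<close>
lemma traceless_moebius_fixed_point:
  fixes A B E h :: "'a::field"
  assumes "(A * h + B) / (E * h - A) = h" and "h \<noteq> 0"
  shows "B = h * (E * h - 2 * A)"
proof -
  have "E * h - A \<noteq> 0" using assms by auto
  then have "A * h + B = h * (E * h - A)" using assms(1) by (simp add: field_simps)
  then show ?thesis by (simp add: algebra_simps)
qed

lemma moebius_fixed_point_of_square_root:
  fixes M :: "rat^2^2" and \<omega> h :: complex
  assumes "M ** M = mat d" "d < 0" "\<omega> * \<omega> = of_rat d" "moebius M h = h" "h \<noteq> 0"
  shows "\<exists>s\<in>{1, -1::int}. M$2$1 \<noteq> 0
    \<and> of_rat (M$2$1) * h = of_rat (M$1$1) + of_int s * \<omega>
    \<and> of_rat (M$1$2) = h * (of_int s * \<omega> - of_rat (M$1$1))"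
proof -
  define A B E where "A = (of_rat (M$1$1) :: complex)" "B = (of_rat (M$1$2) :: complex)"
    "E = (of_rat (M$2$1) :: complex)"
  have BE: "B * E = of_rat d - A\<^sup>2"
    using mat2_square_eq_neg_scalar(2)[OF assms(1,2)]
    unfolding A_B_E_def by (metis of_rat_diff of_rat_mult of_rat_power)
  have "M$1$2 * M$2$1 < 0"
    using mat2_square_eq_neg_scalar(2)[OF assms(1,2)] \<open>d < 0\<close> zero_le_power2[of "M$1$1"]
    by linarith
  then have "M$2$1 \<noteq> 0" by auto
  have "(A * h + B) / (E * h - A) = h"
    using assms(4) mat2_square_eq_neg_scalar(1)[OF assms(1,2)]
    unfolding moebius_def A_B_E_def by (simp add: of_rat_minus)
  then have B: "B = h * (E * h - 2 * A)"
    using traceless_moebius_fixed_point \<open>h \<noteq> 0\<close> by blast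
  have "(E * h - A) * (E * h - A) = E * B + A\<^sup>2"
    unfolding B by (simp add: algebra_simps power2_eq_square)
  also have "\<dots> = \<omega> * \<omega>" using BE assms(3) by (simp add: algebra_simps)
  finally have "E * h - A = \<omega> \<or> E * h - A = - \<omega>" by (simp add: square_eq_iff)
  then obtain s :: int where "s \<in> {1, -1}" and Eh: "E * h = A + of_int s * \<omega>"
    by (force simp: algebra_simps)
  moreover have "B = h * (of_int s * \<omega> - A)" using B Eh by (simp add: algebra_simps)
  ultimately show ?thesis using \<open>M$2$1 \<noteq> 0\<close> unfolding A_B_E_def by blast
qed

lemma sqrtD_square: "D < 0 \<Longrightarrow> sqrtD D * sqrtD D = of_int D"
  unfolding sqrtD_def
  by (simp add: algebra_simps flip: of_real_mult)

lemma of_int_in_Kfield: "of_int k \<in> Kfield D"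
  unfolding Kfield_def by (rule CollectI, rule exI[of _ "of_int k"], rule exI[of _ 0]) simp

lemma sqrtD_in_Kfield: "sqrtD D \<in> Kfield D"
  unfolding Kfield_def by (rule CollectI, rule exI[of _ 0], rule exI[of _ 1]) simp

lemma of_int_mult_sqrtD_in_Kfield: "of_int k * sqrtD D \<in> Kfield D"
  unfolding Kfield_def by (rule CollectI, rule exI[of _ 0], rule exI[of _ "of_int k"]) simp

lemma varpi_in_Kfield: "varpi D c \<in> Kfield D"
  unfolding Kfield_def varpi_def
  by (rule CollectI, rule exI[of _ "of_int (c * D) / 2"], rule exI[of _ "of_int c / 2"])
     (simp add: of_rat_divide of_rat_mult add_divide_distrib)

lemma varpi_in_order_c: "varpi D c \<in> order_c D c"
  unfolding order_c_def by (rule CollectI, rule exI[of _ 0], rule exI[of _ 1]) simp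

lemma alg_embedding_of_int:
  assumes "alg_embedding D \<iota>"
  shows "\<iota> (of_int k) = mat (of_int k)"
proof -
  have add: "\<iota> (of_int m + of_int n) = \<iota> (of_int m) + \<iota> (of_int n)" for m n
    using assms of_int_in_Kfield unfolding alg_embedding_def by blast
  have one: "\<iota> 1 = mat 1" using assms unfolding alg_embedding_def by blast
  have "\<iota> 0 = 0" using add[of 0 0] by simp
  then show ?thesis
  proof (induction k rule: int_induct[where k = 0])
    case base then show ?case by (simp add: vec_eq_iff mat_def)
  next
    case (step1 i)
    then show ?case using add[of i 1] one by (simp add: vec_eq_iff mat_def)
  next
    case (step2 i)
    have "\<iota> (of_int i) = \<iota> (of_int (i - 1)) + mat 1"
      using add[of "i - 1" 1] one by simp
    then have "\<iota> (of_int (i - 1)) = mat (of_int i) - mat 1"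
      using step2 by (simp add: eq_diff_eq)
    then show ?case by (simp add: vec_eq_iff mat_def)
  qed
qed

lemma alg_embedding_sqrtD_square:
  assumes "alg_embedding D \<iota>" and "D < 0"
  shows "\<iota> (sqrtD D) ** \<iota> (sqrtD D) = mat (of_int D)"
  using assms(1) sqrtD_in_Kfield alg_embedding_of_int[OF assms(1), of D]
  unfolding alg_embedding_def by (metis sqrtD_square[OF assms(2)])

lemma alg_embedding_varpi_double:
  assumes "alg_embedding D \<iota>"
  shows "\<iota> (varpi D c) + \<iota> (varpi D c) = mat (of_int (c * D)) + mat (of_int c) ** \<iota> (sqrtD D)"
proof -
  have "varpi D c + varpi D c = of_int (c * D) + of_int c * sqrtD D"
    by (simp add: varpi_def)
  then show ?thesis
    using assms varpi_in_Kfield of_int_in_Kfield sqrtD_in_Kfield of_int_mult_sqrtD_in_Kfield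
      alg_embedding_of_int[OF assms]
    unfolding alg_embedding_def by metis
qed

lemma order_c_eq_int_span:
  assumes "alg_embedding D \<iota>" and "\<iota> (varpi D c) $ 1 $ 1 \<in> \<int>" and "h \<noteq> 0"
    and "s \<in> {1, -1}"
    and "of_rat (\<iota> (sqrtD D) $ 1 $ 2) = h * (of_int s * sqrtD D - of_rat (\<iota> (sqrtD D) $ 1 $ 1))"
  shows "order_c D c
    = {of_int m + of_int n * (of_rat (\<iota> (varpi D c) $ 1 $ 2) * inverse h) | m n. True}"
proof -
  define V M where "V = \<iota> (varpi D c)" and "M = \<iota> (sqrtD D)"
  have V: "V$1$1 + V$1$1 = of_int (c * D) + of_int c * M$1$1" "V$1$2 + V$1$2 = of_int c * M$1$2"
    using alg_embedding_varpi_double[OF assms(1), of c] unfolding vec_eq_iff V_def M_def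
    by (auto simp: matrix_matrix_mult_def mat_def sum_2 forall_2)
  obtain k where k: "V$1$1 = of_int k" using assms(2) V_def Ints_cases by blast
  define a z where "a = (of_rat (M$1$1) :: complex)"
    and "z = of_rat (V$1$2) * inverse h"
  have ca: "of_int c * a = 2 * of_int k - of_int c * of_int D"
  proof -
    have "(of_rat (of_int c * M$1$1) :: complex) = of_rat (of_int k + of_int k - of_int (c * D))"
      using V(1) k by simp
    then show ?thesis unfolding a_def by (simp add: of_rat_mult of_rat_diff of_rat_add)
  qed
  have "(of_rat (V$1$2) :: complex) = of_rat (of_int c * M$1$2 / 2)"
    using V(2) by (simp add: field_simps)
  then have "z = (of_int s * of_int c * sqrtD D - of_int c * a) / 2"
    using assms(3,5) unfolding z_def a_def M_def by (simp add: of_rat_mult of_rat_divide field_simps)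
  then have z: "z = (of_int s * of_int c * sqrtD D + of_int c * of_int D) / 2 - of_int k"
    unfolding ca by (simp add: field_simps)
  obtain r where "z = of_int s * varpi D c + of_int r"
  proof (cases "s = 1")
    case True
    then have "z = of_int s * varpi D c + of_int (- k)" unfolding z varpi_def by simp
    then show ?thesis using that by blast
  next
    case False
    then have "s = -1" using \<open>s \<in> {1, -1}\<close> by simp
    then have "z = of_int s * varpi D c + of_int (c * D - k)"
      unfolding z varpi_def by (simp add: field_simps)
    then show ?thesis using that by blast
  qed
  then show ?thesis
    unfolding order_c_def z_def V_def using int_span_eq_affine \<open>s \<in> {1, -1}\<close> by blast
qed

theorem lemma2p3:
  fixes D c N0 N1 :: int and \<iota> :: "complex \<Rightarrow> rat^2^2" and h0 :: complex
  assumes "imag_quad_disc D"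
    and "N0 > 0" and "N1 > 0" and "c > 0" and "coprime c (N0 * N1^2)"
    and "alg_embedding D \<iota>"
    and "admissible D c N0 \<iota>"
    and "Im h0 > 0"
    and "\<forall>a \<in> Kfield D - {0}. moebius (\<iota> a) h0 = h0"
  shows "Kfield D = {of_rat p + of_rat q * h0 | p q. True}
    \<and> order_c D c = {of_int m + of_int n * (of_rat (\<iota> (varpi D c) $ 1 $ 2) * inverse h0) | m n. True}"
proof -
  define M where "M = \<iota> (sqrtD D)"
  have "D < 0" using assms(1) by (simp add: imag_quad_disc_def)
  have "h0 \<noteq> 0" using assms(8) by auto
  have "sqrtD D \<noteq> 0" using sqrtD_square[OF \<open>D < 0\<close>] \<open>D < 0\<close> by auto
  then have "moebius M h0 = h0" using assms(9) sqrtD_in_Kfield M_def by blast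
  then obtain s where "s \<in> {1, -1}" and "M$2$1 \<noteq> 0"
    and h0: "of_rat (M$2$1) * h0 = of_rat (M$1$1) + of_int s * sqrtD D"
    and b: "of_rat (M$1$2) = h0 * (of_int s * sqrtD D - of_rat (M$1$1))"
    using moebius_fixed_point_of_square_root[of M "of_int D" "sqrtD D" h0]
      alg_embedding_sqrtD_square[OF assms(6) \<open>D < 0\<close>] sqrtD_square[OF \<open>D < 0\<close>]
      \<open>D < 0\<close> \<open>h0 \<noteq> 0\<close> unfolding M_def by (simp only: of_rat_of_int_eq of_int_less_0_iff) blast
  have "h0 = of_rat (M$1$1 / M$2$1) + of_rat (of_int s / M$2$1) * sqrtD D"
    using h0 \<open>M$2$1 \<noteq> 0\<close> by (simp add: of_rat_divide field_simps)
  moreover have "of_int s / M$2$1 \<noteq> 0" using \<open>s \<in> {1, -1}\<close> \<open>M$2$1 \<noteq> 0\<close> by auto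
  ultimately have "Kfield D = {of_rat p + of_rat q * h0 | p q. True}"
    unfolding Kfield_def by (rule rat_span_eq_affine)
  moreover have "\<iota> (varpi D c) $ 1 $ 1 \<in> \<int>"
    using assms(7) varpi_in_Kfield varpi_in_order_c unfolding admissible_def int_mat_def by blast
  ultimately show ?thesis
    using order_c_eq_int_span[OF assms(6) _ \<open>h0 \<noteq> 0\<close> \<open>s \<in> {1, -1}\<close>] b M_def by blast
qed

end
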